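(* Let $r(x)$ and $s(x)$ be $\Sigma_m$-terms whose only variable (if any) is $x$, interpreted in $Q_0$. If $r(q)=s(q)$ for infinitely many rationals $q$, then $r(q)\neq s(q)$ for only finitely many rationals $q$.
   Context: $\Sigma_m=(0,1,+,\cdot,-,{}^{-1})$. $Q_0$ is the field of rational numbers with its usual $0,1,+,\cdot,-$ and with the total inverse defined by $q^{-1}=1/q$ for $q\neq 0$ and $0^{-1}=0$. (In the paper: $r\equiv_\infty s$ means agreement at infinitely many rationals, $r\equiv_{ae} s$ means disagreement at only finitely many rationals, and the claim is $r\equiv_\infty s\Rightarrow r\equiv_{ae} s$.) *)

theory Defs
  imports Complex_Main
begin

datatype sterm = Var | Zero | One | Plus sterm sterm | Times sterm sterm
  | Neg sterm | Inv sterm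

text \<open>Interpretation in Q_0: rationals with total inverse (inverse 0 = 0 in Isabelle's rat).\<close>
primrec eval :: "sterm \<Rightarrow> rat \<Rightarrow> rat" where
  "eval Var q = q"
| "eval Zero q = 0"
| "eval One q = 1"
| "eval (Plus a b) q = eval a q + eval b q"
| "eval (Times a b) q = eval a q * eval b q"
| "eval (Neg a) q = - eval a q"
| "eval (Inv a) q = (if eval a q = 0 then 0 else 1 / eval a q)"

end

theory Submission
  imports Defs "HOL-Computational_Algebra.Polynomial"
begin

(* Call a function f on a field cofinitely rational if it agrees with a quotient
   P/D of polynomials, D \<noteq> 0, at all but finitely many points.  Such functions are closed
   under +, *, negation and (total) inversion, so every \<Sigma>_m-term denotes one.  A cofinitely
   rational function is either zero at almost all points or nonzero at almost all points,
   because a nonzero polynomial has only finitely many roots.  Applying this dichotomy to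
   the difference eval r - eval s gives the theorem: if the two terms agree infinitely often,
   the second alternative is impossible, so they disagree only finitely often. *)

lemma eventually_poly_nonzero:
  fixes D :: "'a::idom poly"
  assumes "D \<noteq> 0"
  shows "\<forall>\<^sub>F x in cofinite. poly D x \<noteq> 0"
  unfolding eventually_cofinite using poly_roots_finite[OF assms] by simp

definition cofinitely_rational :: "('a::field \<Rightarrow> 'a) \<Rightarrow> bool" where
  "cofinitely_rational f \<longleftrightarrow>
     (\<exists>P D. D \<noteq> 0 \<and> (\<forall>\<^sub>F x in cofinite. f x = poly P x / poly D x))"

lemma cofinitely_rationalI:
  assumes "D \<noteq> 0" and "\<forall>\<^sub>F x in cofinite. f x = poly P x / poly D x"
  shows "cofinitely_rational f"
  using assms unfolding cofinitely_rational_def by blast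

lemma cofinitely_rationalE:
  assumes "cofinitely_rational f"
  obtains P D where "D \<noteq> 0"
    and "\<forall>\<^sub>F x in cofinite. poly D x \<noteq> 0 \<and> f x = poly P x / poly D x"
proof -
  from assms obtain P D where D: "D \<noteq> 0"
    and f: "\<forall>\<^sub>F x in cofinite. f x = poly P x / poly D x"
    unfolding cofinitely_rational_def by blast
  have "\<forall>\<^sub>F x in cofinite. poly D x \<noteq> 0 \<and> f x = poly P x / poly D x"
    using eventually_conj[OF eventually_poly_nonzero[OF D] f] .
  with D that show ?thesis by blast
qed

lemma cofinitely_rational_poly: "cofinitely_rational (poly P)"
  by (rule cofinitely_rationalI[of 1 _ P]) simp_all

lemma cofinitely_rational_add:
  assumes "cofinitely_rational f" and "cofinitely_rational g"
  shows "cofinitely_rational (\<lambda>x. f x + g x)"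
proof -
  obtain P1 D1 where D1: "D1 \<noteq> 0"
    and f: "\<forall>\<^sub>F x in cofinite. poly D1 x \<noteq> 0 \<and> f x = poly P1 x / poly D1 x"
    using assms(1) by (rule cofinitely_rationalE)
  obtain P2 D2 where D2: "D2 \<noteq> 0"
    and g: "\<forall>\<^sub>F x in cofinite. poly D2 x \<noteq> 0 \<and> g x = poly P2 x / poly D2 x"
    using assms(2) by (rule cofinitely_rationalE)
  have D: "D1 * D2 \<noteq> 0" using D1 D2 by simp
  have "\<forall>\<^sub>F x in cofinite. f x + g x = poly (P1 * D2 + P2 * D1) x / poly (D1 * D2) x"
    using f g by eventually_elim (auto simp: field_simps)
  with D show ?thesis by (rule cofinitely_rationalI)
qed

lemma cofinitely_rational_mult:
  assumes "cofinitely_rational f" and "cofinitely_rational g"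
  shows "cofinitely_rational (\<lambda>x. f x * g x)"
proof -
  obtain P1 D1 where D1: "D1 \<noteq> 0"
    and f: "\<forall>\<^sub>F x in cofinite. f x = poly P1 x / poly D1 x"
    using assms(1) unfolding cofinitely_rational_def by blast
  obtain P2 D2 where D2: "D2 \<noteq> 0"
    and g: "\<forall>\<^sub>F x in cofinite. g x = poly P2 x / poly D2 x"
    using assms(2) unfolding cofinitely_rational_def by blast
  have D: "D1 * D2 \<noteq> 0" using D1 D2 by simp
  have "\<forall>\<^sub>F x in cofinite. f x * g x = poly (P1 * P2) x / poly (D1 * D2) x"
    using f g by eventually_elim simp
  with D show ?thesis by (rule cofinitely_rationalI)
qed

lemma cofinitely_rational_minus:
  assumes "cofinitely_rational f"
  shows "cofinitely_rational (\<lambda>x. - f x)"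
proof -
  obtain P D where D: "D \<noteq> 0" and f: "\<forall>\<^sub>F x in cofinite. f x = poly P x / poly D x"
    using assms unfolding cofinitely_rational_def by blast
  have "\<forall>\<^sub>F x in cofinite. - f x = poly (- P) x / poly D x"
    using f by eventually_elim simp
  with D show ?thesis by (rule cofinitely_rationalI)
qed

text \<open>Inversion: \<open>inverse (P/D) = D/P\<close> holds even at zeros (\<open>inverse 0 = 0\<close>); when \<open>P = 0\<close>
  the function is almost everywhere zero and so is its inverse.\<close>
lemma cofinitely_rational_inverse:
  assumes "cofinitely_rational f"
  shows "cofinitely_rational (\<lambda>x. inverse (f x))"
proof -
  obtain P D where D: "D \<noteq> 0" and f: "\<forall>\<^sub>F x in cofinite. f x = poly P x / poly D x"
    using assms unfolding cofinitely_rational_def by blast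
  show ?thesis
  proof (cases "P = 0")
    case True
    have "\<forall>\<^sub>F x in cofinite. inverse (f x) = poly 0 x / poly 1 x"
      using f by eventually_elim (simp add: True)
    then show ?thesis by (rule cofinitely_rationalI[OF one_neq_zero])
  next
    case False
    have "\<forall>\<^sub>F x in cofinite. inverse (f x) = poly D x / poly P x"
      using f by eventually_elim simp
    with False show ?thesis by (rule cofinitely_rationalI)
  qed
qed

lemma cofinitely_rational_eval: "cofinitely_rational (eval t)"
proof (induction t)
  case Var
  have "eval Var = poly [:0, 1:]" by (simp add: fun_eq_iff)
  then show ?case using cofinitely_rational_poly by metis
next
  case Zero
  have "eval Zero = poly 0" by (simp add: fun_eq_iff)
  then show ?case using cofinitely_rational_poly by metis
next
  case One
  have "eval One = poly 1" by (simp add: fun_eq_iff)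
  then show ?case using cofinitely_rational_poly by metis
next
  case (Plus a b)
  then show ?case using cofinitely_rational_add by simp
next
  case (Times a b)
  then show ?case using cofinitely_rational_mult by simp
next
  case (Neg a)
  then show ?case using cofinitely_rational_minus by simp
next
  case (Inv a)
  have "eval (Inv a) = (\<lambda>q. inverse (eval a q))"
    by (simp add: fun_eq_iff divide_inverse)
  with Inv show ?case using cofinitely_rational_inverse by simp
qed

text \<open>Zero dichotomy: a cofinitely rational function vanishes either almost everywhere or
  almost nowhere, since its numerator is either the zero polynomial or has finitely many roots.\<close>
lemma cofinitely_rational_zero_dichotomy:
  assumes "cofinitely_rational f"
  shows "(\<forall>\<^sub>F x in cofinite. f x = 0) \<or> (\<forall>\<^sub>F x in cofinite. f x \<noteq> 0)"
proof -
  obtain P D where "D \<noteq> 0"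
    and f: "\<forall>\<^sub>F x in cofinite. poly D x \<noteq> 0 \<and> f x = poly P x / poly D x"
    using assms by (rule cofinitely_rationalE)
  show ?thesis
  proof (cases "P = 0")
    case True
    have "\<forall>\<^sub>F x in cofinite. f x = 0"
      using f by eventually_elim (simp add: True)
    then show ?thesis ..
  next
    case False
    have "\<forall>\<^sub>F x in cofinite. f x \<noteq> 0"
      using f eventually_poly_nonzero[OF False] by eventually_elim simp
    then show ?thesis ..
  qed
qed

theorem theorem3:
  fixes r s :: sterm
  assumes "infinite {q :: rat. eval r q = eval s q}"
  shows "finite {q :: rat. eval r q \<noteq> eval s q}"
proof -
  have "cofinitely_rational (\<lambda>q. eval r q + - eval s q)"
    by (intro cofinitely_rational_add cofinitely_rational_minus cofinitely_rational_eval)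
  from cofinitely_rational_zero_dichotomy[OF this]
  have "(\<forall>\<^sub>F q in cofinite. eval r q = eval s q) \<or>
        (\<forall>\<^sub>F q in cofinite. eval r q \<noteq> eval s q)"
    by simp
  moreover have "\<not> (\<forall>\<^sub>F q in cofinite. eval r q \<noteq> eval s q)"
    using assms unfolding eventually_cofinite by simp
  ultimately show ?thesis
    unfolding eventually_cofinite by simp
qed

end
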